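(* Let $F$ be a recurrent set, $X\subset F$ a finite $F$-maximal bifix code and $w\in F$ a nonempty word. Let $G=\{u\in A^*\mid uw\in X\}$ and $D=\{u\in A^*\mid wu\in X\}$. If $G\ne\emptyset$, $D\neq\emptyset$ and $Gw\cap wD=\emptyset$, then the set $Y=(X\cup\{w\}\cup(GwD\cap F))\setminus(Gw\cup wD)$ is a finite $F$-maximal bifix code with the same $F$-degree as $X$.
   Context: $A$ is a finite alphabet. $F\subset A^*$ is recurrent if it is nonempty, closed under factors, and for all $u,v\in F$ there is $t\in F$ with $utv\in F$. A bifix code is a set of nonempty words none of which is a proper prefix or proper suffix of another; $X\subset F$ is $F$-maximal bifix if not properly contained in any bifix code contained in $F$. A parse of $z$ with respect to $X$ is a triple $(v,x,u)$ with $z=vxu$, $v$ having no suffix in $X$, $x\in X^*$, $u$ having no prefix in $X$; $\delta_X(z)$ is their number and the $F$-degree is $d_F(X)=\max_{z\in F}\delta_X(z)$. *)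

theory Defs
  imports Main "HOL-Library.Sublist" "HOL-Library.Extended_Nat"
begin

definition factor_closed :: "'a list set \<Rightarrow> bool" where
  "factor_closed F \<longleftrightarrow> (\<forall>z\<in>F. \<forall>p u s. z = p @ u @ s \<longrightarrow> u \<in> F)"

definition recurrent :: "'a set \<Rightarrow> 'a list set \<Rightarrow> bool" where
  "recurrent A F \<longleftrightarrow> F \<noteq> {} \<and> F \<subseteq> lists A \<and> factor_closed F \<and>
     (\<forall>u\<in>F. \<forall>v\<in>F. \<exists>t\<in>F. u @ t @ v \<in> F)"

definition bifix_code :: "'a list set \<Rightarrow> bool" where
  "bifix_code X \<longleftrightarrow> [] \<notin> X \<and>
     (\<forall>x\<in>X. \<forall>y\<in>X. strict_prefix x y \<longrightarrow> False) \<and>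
     (\<forall>x\<in>X. \<forall>y\<in>X. strict_suffix x y \<longrightarrow> False)"

definition F_maximal_bifix :: "'a list set \<Rightarrow> 'a list set \<Rightarrow> bool" where
  "F_maximal_bifix F X \<longleftrightarrow> bifix_code X \<and> X \<subseteq> F \<and>
     (\<forall>Y. bifix_code Y \<and> Y \<subseteq> F \<and> X \<subseteq> Y \<longrightarrow> Y = X)"

definition star :: "'a list set \<Rightarrow> 'a list set" where
  "star X = {concat xs | xs. xs \<in> lists X}"

definition parses :: "'a list set \<Rightarrow> 'a list \<Rightarrow> ('a list \<times> 'a list \<times> 'a list) set" where
  "parses X z = {(v, x, u). z = v @ x @ u \<and> (\<forall>s. suffix s v \<longrightarrow> s \<notin> X) \<and>
      x \<in> star X \<and> (\<forall>p. prefix p u \<longrightarrow> p \<notin> X)}"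

definition delta :: "'a list set \<Rightarrow> 'a list \<Rightarrow> nat" where
  "delta X z = card (parses X z)"

text \<open>F-degree, taken in extended naturals (supremum; equals the maximum when attained).\<close>
definition F_degree :: "'a list set \<Rightarrow> 'a list set \<Rightarrow> enat" where
  "F_degree F X = (SUP z\<in>F. enat (delta X z))"

end

theory Submission
  imports Defs
begin

text \<open>
  - Parses are counted by their first component: for a prefix code X not containing
    the empty word, delta X z is the number of prefixes of z having no suffix in X
    (and symmetrically for suffix codes and suffixes without a prefix in X).
  - Over a recurrent set F, a finite F-maximal bifix code has bounded delta on F;
    conversely, a bifix code contained in F with bounded delta is F-maximal.  If z0
    maximises delta X on F and z0 t z0 is in F, then this word is saturated: its
    prefixes longer than z0 have a suffix in X, its suffixes longer than z0 have a
    prefix in X.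
  - In the locale internal_transformation we show that Y is a bifix code, that
    delta Y z \<le> delta X z for all z in F, and that delta X W \<le> delta Y W for a
    saturated word W.  Both inequalities are proved by injecting the prefixes that
    are free for one code only into those free for the other code only, by deleting
    resp. appending a word of D.
  - Bounded delta Y gives F-maximality of Y, and the two inequalities give equal
    F-degrees; the main theorem is an instance of the locale.
\<close>

section \<open>The submonoid generated by a code\<close>

lemma star_Nil: "[] \<in> star X"
  unfolding star_def by (auto intro!: exI[of _ "[]"])

lemma star_lists: "x \<in> star X \<Longrightarrow> \<exists>xs. xs \<in> lists X \<and> x = concat xs"
  unfolding star_def by auto

lemma star_prepend:
  assumes "x \<in> X" "y \<in> star X" shows "x @ y \<in> star X"
proof -
  from assms(2) obtain xs where "xs \<in> lists X" "y = concat xs" by (auto dest: star_lists)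
  with assms(1) show ?thesis unfolding star_def by (auto intro!: exI[of _ "x # xs"])
qed

lemma star_append:
  assumes "y \<in> star X" "x \<in> X" shows "y @ x \<in> star X"
proof -
  from assms(1) obtain xs where "xs \<in> lists X" "y = concat xs" by (auto dest: star_lists)
  with assms(2) show ?thesis unfolding star_def by (auto intro!: exI[of _ "xs @ [x]"])
qed

lemma factor_star_then_prefix_free:
  assumes "[] \<notin> X"
  shows "\<exists>x u. r = x @ u \<and> x \<in> star X \<and> (\<forall>p. prefix p u \<longrightarrow> p \<notin> X)"
proof (induction "length r" arbitrary: r rule: less_induct)
  case less
  show ?case
  proof (cases "\<exists>p. prefix p r \<and> p \<in> X")
    case True
    then obtain p r' where p: "p \<in> X" "r = p @ r'" by (auto simp: prefix_def)
    with assms have "length r' < length r" by (cases p) auto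
    from less(1)[OF this] obtain x u
      where "r' = x @ u" "x \<in> star X" "\<forall>p. prefix p u \<longrightarrow> p \<notin> X" by blast
    with p show ?thesis by (intro exI[of _ "p @ x"] exI[of _ u]) (auto simp: star_prepend)
  next
    case False
    then show ?thesis by (intro exI[of _ "[]"] exI[of _ r]) (auto simp: star_Nil)
  qed
qed

lemma factor_suffix_free_then_star:
  assumes "[] \<notin> X"
  shows "\<exists>v x. r = v @ x \<and> x \<in> star X \<and> (\<forall>s. suffix s v \<longrightarrow> s \<notin> X)"
proof (induction "length r" arbitrary: r rule: less_induct)
  case less
  show ?case
  proof (cases "\<exists>s. suffix s r \<and> s \<in> X")
    case True
    then obtain s r' where s: "s \<in> X" "r = r' @ s" by (auto simp: suffix_def)
    with assms have "length r' < length r" by (cases s) auto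
    from less(1)[OF this] obtain v x
      where "r' = v @ x" "x \<in> star X" "\<forall>s. suffix s v \<longrightarrow> s \<notin> X" by blast
    with s show ?thesis by (intro exI[of _ v] exI[of _ "x @ s"]) (auto simp: star_append)
  next
    case False
    then show ?thesis by (intro exI[of _ r] exI[of _ "[]"]) (auto simp: star_Nil)
  qed
qed

lemma concat_prefix_factorization_unique:
  assumes pc: "\<forall>x\<in>X. \<forall>y\<in>X. \<not> strict_prefix x y"
  shows "xs1 \<in> lists X \<Longrightarrow> xs2 \<in> lists X \<Longrightarrow> concat xs1 @ u1 = concat xs2 @ u2 \<Longrightarrow>
    \<forall>p. prefix p u1 \<longrightarrow> p \<notin> X \<Longrightarrow> \<forall>p. prefix p u2 \<longrightarrow> p \<notin> X \<Longrightarrow> concat xs1 = concat xs2"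
proof (induction xs1 arbitrary: xs2 u1 u2)
  case Nil
  then show ?case by (cases xs2) auto
next
  case (Cons a as)
  show ?case
  proof (cases xs2)
    case Nil
    with Cons.prems show ?thesis by auto
  next
    case (Cons b bs)
    have eq: "a @ concat as @ u1 = b @ concat bs @ u2" using Cons.prems(3) Cons by simp
    then have "prefix a b \<or> prefix b a"
      using prefix_same_cases[of a "a @ concat as @ u1" b] by (metis prefixI)
    moreover have "a \<in> X" "b \<in> X" using Cons.prems Cons by auto
    ultimately have "a = b" using pc by (auto simp: strict_prefix_def)
    with eq Cons.IH[of bs u1 u2] Cons.prems Cons show ?thesis by auto
  qed
qed

lemma concat_suffix_factorization_unique:
  assumes sc: "\<forall>x\<in>X. \<forall>y\<in>X. \<not> strict_suffix x y"
  shows "xs1 \<in> lists X \<Longrightarrow> xs2 \<in> lists X \<Longrightarrow> v1 @ concat xs1 = v2 @ concat xs2 \<Longrightarrow>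
    \<forall>s. suffix s v1 \<longrightarrow> s \<notin> X \<Longrightarrow> \<forall>s. suffix s v2 \<longrightarrow> s \<notin> X \<Longrightarrow> concat xs1 = concat xs2"
proof (induction xs1 arbitrary: xs2 v1 v2 rule: rev_induct)
  case Nil
  then show ?case by (cases xs2 rule: rev_exhaust) (auto simp: suffix_def)
next
  case (snoc a as)
  show ?case
  proof (cases xs2 rule: rev_exhaust)
    case Nil
    with snoc.prems show ?thesis by (auto simp: suffix_def)
  next
    case (snoc bs b)
    have eq: "(v1 @ concat as) @ a = (v2 @ concat bs) @ b" using snoc.prems(3) snoc by simp
    then have "suffix a b \<or> suffix b a"
      using suffix_same_cases[of a "(v1 @ concat as) @ a" b] by (metis suffixI)
    moreover have "a \<in> X" "b \<in> X" using snoc.prems snoc by auto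
    ultimately have "a = b" using sc by (auto simp: strict_suffix_def)
    with eq snoc.IH[of bs v1 v2] snoc.prems snoc show ?thesis by auto
  qed
qed

section \<open>Counting parses\<close>

text \<open>The prefixes of z without a suffix in X, resp. the suffixes of z without a
  prefix in X: these are the first, resp. last, components of the X-parses of z.\<close>

definition freeP :: "'a list set \<Rightarrow> 'a list \<Rightarrow> 'a list set" where
  "freeP X z = {p. prefix p z \<and> (\<forall>s. suffix s p \<longrightarrow> s \<notin> X)}"

definition freeS :: "'a list set \<Rightarrow> 'a list \<Rightarrow> 'a list set" where
  "freeS X z = {s. suffix s z \<and> (\<forall>p. prefix p s \<longrightarrow> p \<notin> X)}"

lemma finite_freeP: "finite (freeP X z)"
  by (rule finite_subset[of _ "set (prefixes z)"]) (auto simp: freeP_def)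

lemma finite_freeS: "finite (freeS X z)"
  by (rule finite_subset[of _ "set (suffixes z)"]) (auto simp: freeS_def)

lemma freeP_mono_append: "freeP X z \<subseteq> freeP X (z @ u)"
  by (auto simp: freeP_def prefix_def)

lemma freeS_mono_prepend: "freeS X z \<subseteq> freeS X (u @ z)"
  by (auto simp: freeS_def suffix_def)

text \<open>A parse of a prefix code is determined by its first component.\<close>

lemma delta_eq_card_freeP:
  assumes pc: "\<forall>x\<in>X. \<forall>y\<in>X. \<not> strict_prefix x y" and ne: "[] \<notin> X"
  shows "delta X z = card (freeP X z)"
proof -
  have "inj_on (\<lambda>(v, x, u). v) (parses X z)"
  proof (rule inj_onI)
    fix q1 q2 assume "q1 \<in> parses X z" "q2 \<in> parses X z" "(\<lambda>(v, x, u). v) q1 = (\<lambda>(v, x, u). v) q2"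
    then obtain v x1 u1 x2 u2 where q: "q1 = (v, x1, u1)" "q2 = (v, x2, u2)"
      and a: "(v, x1, u1) \<in> parses X z" "(v, x2, u2) \<in> parses X z"
      by (cases q1, cases q2) auto
    then have eq: "x1 @ u1 = x2 @ u2" by (auto simp: parses_def)
    from a obtain xs1 xs2 where "xs1 \<in> lists X" "x1 = concat xs1" "xs2 \<in> lists X" "x2 = concat xs2"
      by (auto simp: parses_def dest!: star_lists)
    with concat_prefix_factorization_unique[OF pc, of xs1 xs2 u1 u2] eq a
    have "x1 = x2" by (auto simp: parses_def)
    with eq q show "q1 = q2" by simp
  qed
  moreover have "(\<lambda>(v, x, u). v) ` parses X z = freeP X z"
  proof (intro equalityI subsetI)
    fix p assume p: "p \<in> freeP X z"
    then obtain r where r: "z = p @ r" by (auto simp: freeP_def prefix_def)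
    from factor_star_then_prefix_free[OF ne, of r] obtain x u
      where "r = x @ u" "x \<in> star X" "\<forall>p. prefix p u \<longrightarrow> p \<notin> X" by blast
    with p r have "(p, x, u) \<in> parses X z" by (auto simp: parses_def freeP_def)
    then show "p \<in> (\<lambda>(v, x, u). v) ` parses X z" by force
  qed (auto simp: parses_def freeP_def)
  ultimately show ?thesis unfolding delta_def by (metis bij_betw_def bij_betw_same_card)
qed

lemma delta_eq_card_freeS:
  assumes sc: "\<forall>x\<in>X. \<forall>y\<in>X. \<not> strict_suffix x y" and ne: "[] \<notin> X"
  shows "delta X z = card (freeS X z)"
proof -
  have "inj_on (\<lambda>(v, x, u). u) (parses X z)"
  proof (rule inj_onI)
    fix q1 q2 assume "q1 \<in> parses X z" "q2 \<in> parses X z" "(\<lambda>(v, x, u). u) q1 = (\<lambda>(v, x, u). u) q2"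
    then obtain v1 x1 u v2 x2 where q: "q1 = (v1, x1, u)" "q2 = (v2, x2, u)"
      and a: "(v1, x1, u) \<in> parses X z" "(v2, x2, u) \<in> parses X z"
      by (cases q1, cases q2) auto
    then have eq: "v1 @ x1 = v2 @ x2" by (auto simp: parses_def)
    from a obtain xs1 xs2 where "xs1 \<in> lists X" "x1 = concat xs1" "xs2 \<in> lists X" "x2 = concat xs2"
      by (auto simp: parses_def dest!: star_lists)
    with concat_suffix_factorization_unique[OF sc, of xs1 xs2 v1 v2] eq a
    have "x1 = x2" by (auto simp: parses_def)
    with eq q show "q1 = q2" by simp
  qed
  moreover have "(\<lambda>(v, x, u). u) ` parses X z = freeS X z"
  proof (intro equalityI subsetI)
    fix s assume s: "s \<in> freeS X z"
    then obtain r where r: "z = r @ s" by (auto simp: freeS_def suffix_def)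
    from factor_suffix_free_then_star[OF ne, of r] obtain v x
      where "r = v @ x" "x \<in> star X" "\<forall>s. suffix s v \<longrightarrow> s \<notin> X" by blast
    with s r have "(v, x, s) \<in> parses X z" by (auto simp: parses_def freeS_def)
    then show "s \<in> (\<lambda>(v, x, u). u) ` parses X z" by force
  qed (auto simp: parses_def freeS_def suffix_def)
  ultimately show ?thesis unfolding delta_def by (metis bij_betw_def bij_betw_same_card)
qed

lemma bifix_code_prefix_code: "bifix_code X \<Longrightarrow> \<forall>x\<in>X. \<forall>y\<in>X. \<not> strict_prefix x y"
  unfolding bifix_code_def by blast

lemma bifix_code_suffix_code: "bifix_code X \<Longrightarrow> \<forall>x\<in>X. \<forall>y\<in>X. \<not> strict_suffix x y"
  unfolding bifix_code_def by blast

lemma bifix_code_Nil: "bifix_code X \<Longrightarrow> [] \<notin> X"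
  unfolding bifix_code_def by blast

lemma delta_bifix_freeP: "bifix_code X \<Longrightarrow> delta X z = card (freeP X z)"
  by (simp add: delta_eq_card_freeP bifix_code_prefix_code bifix_code_Nil)

lemma delta_bifix_freeS: "bifix_code X \<Longrightarrow> delta X z = card (freeS X z)"
  by (simp add: delta_eq_card_freeS bifix_code_suffix_code bifix_code_Nil)

lemma prefix_code_common_prefix:
  "\<forall>x\<in>X. \<forall>y\<in>X. \<not> strict_prefix x y \<Longrightarrow> a \<in> X \<Longrightarrow> b \<in> X \<Longrightarrow> prefix a c \<Longrightarrow> prefix b c \<Longrightarrow> a = b"
  using prefix_same_cases[of a c b] by (auto simp: strict_prefix_def)

lemma suffix_code_common_suffix:
  "\<forall>x\<in>X. \<forall>y\<in>X. \<not> strict_suffix x y \<Longrightarrow> a \<in> X \<Longrightarrow> b \<in> X \<Longrightarrow> suffix a c \<Longrightarrow> suffix b c \<Longrightarrow> a = b"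
  using suffix_same_cases[of a c b] by (auto simp: strict_suffix_def)

text \<open>Comparing the numbers of free prefixes of two codes reduces to an injection
  between the two set differences.\<close>

lemma card_le_by_injection_on_difference:
  assumes "finite A" "finite B" "inj_on f (A - B)" "f ` (A - B) \<subseteq> B - A"
  shows "card A \<le> card B"
proof -
  have "card (A - B) \<le> card (B - A)"
    using assms by (intro card_inj_on_le) auto
  moreover have "card A = card (A - B) + card (A \<inter> B)" "card B = card (B - A) + card (A \<inter> B)"
    using assms(1,2) by (simp_all add: card_Diff_subset_Int card_mono Int_commute)
  ultimately show ?thesis by linarith
qed

section \<open>Degree over a recurrent set\<close>

lemma recurrent_factor: "recurrent A F \<Longrightarrow> p @ u @ s \<in> F \<Longrightarrow> u \<in> F"
  unfolding recurrent_def factor_closed_def by blast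

text \<open>If extending z by u to the right does not increase delta, then every prefix of zu
  longer than z has a suffix in X (no new free prefix appears); dually on the left.\<close>

lemma saturated_right:
  assumes "bifix_code X" "delta X (z @ u) \<le> delta X z" "prefix p (z @ u)" "length z < length p"
  shows "\<exists>s. suffix s p \<and> s \<in> X"
proof (rule ccontr)
  assume free: "\<nexists>s. suffix s p \<and> s \<in> X"
  have "card (freeP X (z @ u)) \<le> card (freeP X z)"
    using assms(2) delta_bifix_freeP[OF assms(1)] by simp
  then have "freeP X z = freeP X (z @ u)"
    using freeP_mono_append finite_freeP by (metis card_seteq)
  moreover have "p \<in> freeP X (z @ u)" using free assms(3) by (auto simp: freeP_def)
  ultimately have "prefix p z" by (auto simp: freeP_def)
  then show False using assms(4) by (auto dest: prefix_length_le)
qed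

lemma saturated_left:
  assumes "bifix_code X" "delta X (u @ z) \<le> delta X z" "suffix s (u @ z)" "length z < length s"
  shows "\<exists>p. prefix p s \<and> p \<in> X"
proof (rule ccontr)
  assume free: "\<nexists>p. prefix p s \<and> p \<in> X"
  have "card (freeS X (u @ z)) \<le> card (freeS X z)"
    using assms(2) delta_bifix_freeS[OF assms(1)] by simp
  then have "freeS X z = freeS X (u @ z)"
    using freeS_mono_prepend finite_freeS by (metis card_seteq)
  moreover have "s \<in> freeS X (u @ z)" using free assms(3) by (auto simp: freeS_def)
  ultimately have "suffix s z" by (auto simp: freeS_def)
  then show False using assms(4) by (auto dest: suffix_length_le)
qed

lemma card_short_prefixes: "card {p. prefix p z \<and> length p < n} \<le> n"
proof -
  have "inj_on length {p. prefix p z \<and> length p < n}"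
    by (rule inj_onI) (use prefix_same_cases[of _ z] in \<open>auto simp: prefix_def\<close>)
  then have "card {p. prefix p z \<and> length p < n} \<le> card {..<n}"
    by (rule card_inj_on_le) auto
  then show ?thesis by simp
qed

lemma card_short_suffixes: "card {s. suffix s z \<and> length s < n} \<le> n"
proof -
  have "inj_on length {s. suffix s z \<and> length s < n}"
    by (rule inj_onI) (use suffix_same_cases[of _ z] in \<open>auto simp: suffix_def\<close>)
  then have "card {s. suffix s z \<and> length s < n} \<le> card {..<n}"
    by (rule card_inj_on_le) auto
  then show ?thesis by simp
qed

lemma bifix_code_insert:
  assumes "bifix_code X" and "y \<noteq> []"
    and "\<forall>x\<in>X. \<not> prefix x y \<and> \<not> suffix x y \<and> length x < length y"
  shows "bifix_code (insert y X)"
  using assms unfolding bifix_code_def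
  by (auto simp: strict_prefix_def strict_suffix_def) (meson leD prefix_length_le suffix_length_le)+

text \<open>For a finite F-maximal bifix code, either every long word of F has a prefix in X
  or every long word of F has a suffix in X: otherwise u t v, for witnesses u and v,
  could be added to X.\<close>

lemma long_words_have_prefix_or_suffix:
  assumes rec: "recurrent A F" and fin: "finite X" and mx: "F_maximal_bifix F X"
  obtains n where "\<forall>u\<in>F. n \<le> length u \<longrightarrow> (\<exists>x\<in>X. prefix x u)"
    | n where "\<forall>v\<in>F. n \<le> length v \<longrightarrow> (\<exists>x\<in>X. suffix x v)"
proof -
  have bf: "bifix_code X" and XF: "X \<subseteq> F" using mx by (auto simp: F_maximal_bifix_def)
  define n where "n = Suc (Max (insert 0 (length ` X)))"
  have short: "length x < n" if "x \<in> X" for x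
    using that fin unfolding n_def by (simp add: le_imp_less_Suc)
  have "(\<forall>u\<in>F. n \<le> length u \<longrightarrow> (\<exists>x\<in>X. prefix x u)) \<or>
        (\<forall>v\<in>F. n \<le> length v \<longrightarrow> (\<exists>x\<in>X. suffix x v))"
  proof (rule ccontr)
    assume "\<not> ?thesis"
    then obtain u v where u: "u \<in> F" "n \<le> length u" "\<forall>x\<in>X. \<not> prefix x u"
      and v: "v \<in> F" "n \<le> length v" "\<forall>x\<in>X. \<not> suffix x v" by blast
    from rec u(1) v(1) obtain t where t: "u @ t @ v \<in> F" unfolding recurrent_def by blast
    have new: "\<not> prefix x (u @ t @ v) \<and> \<not> suffix x (u @ t @ v) \<and> length x < length (u @ t @ v)"
      if "x \<in> X" for x
      using short[OF that] u v that prefix_length_prefix[of x "u @ t @ v" u]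
        suffix_length_suffix[of x "u @ t @ v" v] by (auto simp: suffix_def)
    have "u @ t @ v \<noteq> []" using u(2) unfolding n_def by auto
    with new have "bifix_code (insert (u @ t @ v) X)" by (intro bifix_code_insert[OF bf]) auto
    with mx t XF have "insert (u @ t @ v) X = X" unfolding F_maximal_bifix_def by blast
    with new show False by auto
  qed
  with that show ?thesis by blast
qed

text \<open>If every word of F of length at least n has a prefix in X, then every suffix of
  z \<in> F without a prefix in X is shorter than n, so delta X z \<le> n; dually.\<close>

lemma delta_bound_by_prefixes:
  assumes rec: "recurrent A F" and bf: "bifix_code X" and z: "z \<in> F"
    and long: "\<forall>u\<in>F. n \<le> length u \<longrightarrow> (\<exists>x\<in>X. prefix x u)"
  shows "delta X z \<le> n"
proof -
  have "freeS X z \<subseteq> {s. suffix s z \<and> length s < n}"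
  proof
    fix s assume s: "s \<in> freeS X z"
    then obtain r where "r @ s @ [] \<in> F" using z by (auto simp: freeS_def suffix_def)
    then have sF: "s \<in> F" by (rule recurrent_factor[OF rec])
    have "\<not> n \<le> length s"
    proof
      assume "n \<le> length s"
      then obtain x where "x \<in> X" "prefix x s" using long sF by auto
      with s show False by (simp add: freeS_def)
    qed
    with s show "s \<in> {s. suffix s z \<and> length s < n}" by (simp add: freeS_def)
  qed
  then have "card (freeS X z) \<le> card {s. suffix s z \<and> length s < n}"
    by (rule card_mono[rotated]) (rule finite_subset[of _ "set (suffixes z)"], auto)
  then show ?thesis using card_short_suffixes[of z n] by (simp add: delta_bifix_freeS[OF bf])
qed

lemma delta_bound_by_suffixes:
  assumes rec: "recurrent A F" and bf: "bifix_code X" and z: "z \<in> F"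
    and long: "\<forall>v\<in>F. n \<le> length v \<longrightarrow> (\<exists>x\<in>X. suffix x v)"
  shows "delta X z \<le> n"
proof -
  have "freeP X z \<subseteq> {p. prefix p z \<and> length p < n}"
  proof
    fix p assume p: "p \<in> freeP X z"
    then obtain r where "[] @ p @ r \<in> F" using z by (auto simp: freeP_def prefix_def)
    then have pF: "p \<in> F" by (rule recurrent_factor[OF rec])
    have "\<not> n \<le> length p"
    proof
      assume "n \<le> length p"
      then obtain x where "x \<in> X" "suffix x p" using long pF by auto
      with p show False by (simp add: freeP_def)
    qed
    with p show "p \<in> {p. prefix p z \<and> length p < n}" by (simp add: freeP_def)
  qed
  then have "card (freeP X z) \<le> card {p. prefix p z \<and> length p < n}"
    by (rule card_mono[rotated]) (rule finite_subset[of _ "set (prefixes z)"], auto)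
  then show ?thesis using card_short_prefixes[of z n] by (simp add: delta_bifix_freeP[OF bf])
qed

theorem bounded_delta:
  assumes rec: "recurrent A F" and fin: "finite X" and mx: "F_maximal_bifix F X"
  shows "\<exists>N. \<forall>z\<in>F. delta X z \<le> N"
proof -
  have bf: "bifix_code X" using mx by (simp add: F_maximal_bifix_def)
  from rec fin mx show ?thesis
  proof (cases rule: long_words_have_prefix_or_suffix)
    case (1 n)
    then show ?thesis using delta_bound_by_prefixes[OF rec bf] by blast
  next
    case (2 n)
    then show ?thesis using delta_bound_by_suffixes[OF rec bf] by blast
  qed
qed

lemma delta_attains_max:
  assumes "F \<noteq> {}" "\<forall>z\<in>F. delta Z z \<le> N"
  obtains z0 where "z0 \<in> F" "\<forall>z\<in>F. delta Z z \<le> delta Z z0"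
proof -
  have fin: "finite (delta Z ` F)"
    by (rule finite_subset[of _ "{..N}"]) (use assms(2) in auto)
  have "Max (delta Z ` F) \<in> delta Z ` F" using fin assms(1) by (intro Max_in) auto
  then obtain z0 where "z0 \<in> F" "delta Z z0 = Max (delta Z ` F)" by auto
  with fin show ?thesis by (intro that[of z0]) auto
qed

lemma F_degree_eq_max:
  assumes "z0 \<in> F" "\<forall>z\<in>F. delta Z z \<le> delta Z z0"
  shows "F_degree F Z = enat (delta Z z0)"
  unfolding F_degree_def
proof (rule antisym)
  show "(SUP z\<in>F. enat (delta Z z)) \<le> enat (delta Z z0)"
    using assms(2) by (auto intro!: SUP_least)
  show "enat (delta Z z0) \<le> (SUP z\<in>F. enat (delta Z z))"
    using assms(1) by (rule SUP_upper)
qed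

text \<open>Conversely, a bifix code in F with bounded delta is F-maximal: if y could be
  added, take z0 of maximal delta and z0 t y in F; by saturation y has a suffix in
  the code, which must be y itself.\<close>

theorem bounded_delta_imp_maximal:
  assumes rec: "recurrent A F" and bf: "bifix_code Z" and ZF: "Z \<subseteq> F"
    and bd: "\<forall>z\<in>F. delta Z z \<le> N"
  shows "F_maximal_bifix F Z"
  unfolding F_maximal_bifix_def
proof (intro conjI allI impI bf ZF)
  fix Y' assume Y': "bifix_code Y' \<and> Y' \<subseteq> F \<and> Z \<subseteq> Y'"
  have "F \<noteq> {}" using rec by (simp add: recurrent_def)
  then obtain z0 where z0: "z0 \<in> F" "\<forall>z\<in>F. delta Z z \<le> delta Z z0"
    using bd by (rule delta_attains_max)
  have "y \<in> Z" if y: "y \<in> Y'" for y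
  proof -
    have "y \<in> F" "y \<noteq> []" using y Y' bifix_code_Nil by blast+
    from rec z0(1) \<open>y \<in> F\<close> obtain t where t: "z0 @ t @ y \<in> F" unfolding recurrent_def by blast
    then have "delta Z (z0 @ t @ y) \<le> delta Z z0" using z0(2) by blast
    from saturated_right[OF bf this, of "z0 @ t @ y"] \<open>y \<noteq> []\<close>
    obtain s where s: "suffix s (z0 @ t @ y)" "s \<in> Z" by auto
    have "suffix s y \<or> suffix y s"
      using suffix_same_cases[OF s(1), of y] by (simp add: suffix_def)
    with s(2) y Y' have "s = y"
      using bifix_code_suffix_code[of Y'] by (auto simp: strict_suffix_def)
    with s show ?thesis by simp
  qed
  with Y' show "Y' = Z" by blast
qed
section \<open>The internal transformation\<close>

locale internal_transformation =
  fixes A :: "'a set" and F X :: "'a list set" and w :: "'a list" and G D :: "'a list set"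
  assumes recurrent_F: "recurrent A F"
    and finite_X: "finite X" and maximal_X: "F_maximal_bifix F X"
    and w_in_F: "w \<in> F" and w_nonempty: "w \<noteq> []"
    and G_eq: "G = {u \<in> lists A. u @ w \<in> X}" and D_eq: "D = {u \<in> lists A. w @ u \<in> X}"
    and G_nonempty: "G \<noteq> {}" and D_nonempty: "D \<noteq> {}"
    and Gw_wD_disjoint: "(\<lambda>g. g @ w) ` G \<inter> (\<lambda>d. w @ d) ` D = {}"
begin

definition Y :: "'a list set" where
  "Y = (X \<union> {w} \<union> ({g @ w @ d | g d. g \<in> G \<and> d \<in> D} \<inter> F))
        - ((\<lambda>g. g @ w) ` G \<union> (\<lambda>d. w @ d) ` D)"

lemma bifix_X: "bifix_code X" and X_subset_F: "X \<subseteq> F"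
  using maximal_X by (auto simp: F_maximal_bifix_def)

lemma X_common_prefix: "a \<in> X \<Longrightarrow> b \<in> X \<Longrightarrow> prefix a c \<Longrightarrow> prefix b c \<Longrightarrow> a = b"
  using prefix_code_common_prefix[OF bifix_code_prefix_code[OF bifix_X]] .

lemma X_common_suffix: "a \<in> X \<Longrightarrow> b \<in> X \<Longrightarrow> suffix a c \<Longrightarrow> suffix b c \<Longrightarrow> a = b"
  using suffix_code_common_suffix[OF bifix_code_suffix_code[OF bifix_X]] .

text \<open>Since X \<subseteq> F \<subseteq> A*, the restriction to words over A in G and D is vacuous.\<close>

lemma mem_G: "g \<in> G \<longleftrightarrow> g @ w \<in> X"
  using X_subset_F recurrent_F unfolding G_eq recurrent_def by auto

lemma mem_D: "d \<in> D \<longleftrightarrow> w @ d \<in> X"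
  using X_subset_F recurrent_F unfolding D_eq recurrent_def by auto

text \<open>The hypothesis Gw \<inter> wD = {} forces w \<notin> X (else [] \<in> G \<inter> D), so the words of G and
  D are nonempty.\<close>

lemma Gw_neq_wD: "g \<in> G \<Longrightarrow> d \<in> D \<Longrightarrow> g @ w \<noteq> w @ d"
  using Gw_wD_disjoint by blast

lemma w_notin_X: "w \<notin> X"
  using Gw_neq_wD[of "[]" "[]"] mem_G mem_D by auto

lemma G_nonempty_words: "g \<in> G \<Longrightarrow> g \<noteq> []"
  using w_notin_X mem_G by auto

lemma D_nonempty_words: "d \<in> D \<Longrightarrow> d \<noteq> []"
  using w_notin_X mem_D by auto

lemma Y_cases:
  assumes "y \<in> Y"
  obtains (old) "y \<in> X" "\<forall>g\<in>G. y \<noteq> g @ w" "\<forall>d\<in>D. y \<noteq> w @ d"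
    | (w) "y = w"
    | (new) g d where "g \<in> G" "d \<in> D" "y = g @ w @ d"
  using assms unfolding Y_def by blast

lemma Gw_notin_Y: "g \<in> G \<Longrightarrow> g @ w \<notin> Y"
  unfolding Y_def by blast

lemma wD_notin_Y: "d \<in> D \<Longrightarrow> w @ d \<notin> Y"
  unfolding Y_def by blast

lemma X_removed: "x \<in> X \<Longrightarrow> x \<notin> Y \<Longrightarrow> (\<exists>g\<in>G. x = g @ w) \<or> (\<exists>d\<in>D. x = w @ d)"
  unfolding Y_def by blast

lemma w_in_Y: "w \<in> Y"
  using G_nonempty_words D_nonempty_words unfolding Y_def by auto

text \<open>A word gwd of F is never of the form g'w or wd', as X is a bifix code.\<close>

lemma GwD_in_Y:
  assumes g: "g \<in> G" and d: "d \<in> D" and "g @ w @ d \<in> F"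
  shows "g @ w @ d \<in> Y"
proof -
  have "g @ w @ d \<noteq> g' @ w" if "g' \<in> G" for g'
  proof
    assume "g @ w @ d = g' @ w"
    then have "g @ w = g' @ w" using X_common_prefix[of "g @ w" "g' @ w" "g @ w @ d"] g that mem_G
      by (metis append_assoc prefixI prefix_order.refl)
    with \<open>g @ w @ d = g' @ w\<close> D_nonempty_words[OF d] show False by simp
  qed
  moreover have "g @ w @ d \<noteq> w @ d'" if "d' \<in> D" for d'
  proof
    assume "g @ w @ d = w @ d'"
    then have "w @ d = w @ d'" using X_common_suffix[of "w @ d" "w @ d'" "g @ w @ d"] d that mem_D
      by (metis suffixI suffix_order.refl)
    with \<open>g @ w @ d = w @ d'\<close> G_nonempty_words[OF g] show False by simp
  qed
  ultimately show ?thesis using assms unfolding Y_def by blast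
qed

lemma Y_subset_F: "Y \<subseteq> F"
  unfolding Y_def using X_subset_F w_in_F by blast

lemma finite_Y: "finite Y"
proof -
  have "finite G"
    by (rule finite_imageD[of "\<lambda>g. g @ w"], rule finite_subset[OF _ finite_X]) (auto simp: mem_G inj_on_def)
  moreover have "finite D"
    by (rule finite_imageD[of "\<lambda>d. w @ d"], rule finite_subset[OF _ finite_X]) (auto simp: mem_D inj_on_def)
  ultimately have "finite ((\<lambda>(g, d). g @ w @ d) ` (G \<times> D))" by simp
  moreover have "{g @ w @ d | g d. g \<in> G \<and> d \<in> D} = (\<lambda>(g, d). g @ w @ d) ` (G \<times> D)" by auto
  ultimately show ?thesis unfolding Y_def using finite_X by auto
qed

lemma X_prefix_of_Y:
  assumes y: "y \<in> Y" and x: "x \<in> X" and xy: "prefix x y"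
  shows "x = y \<or> (\<exists>g\<in>G. \<exists>d\<in>D. x = g @ w \<and> y = g @ w @ d)"
  using y
proof (cases rule: Y_cases)
  case old
  then show ?thesis using X_common_prefix[OF x old(1) xy prefix_order.refl] by blast
next
  case w
  obtain d0 where d0: "d0 \<in> D" using D_nonempty by blast
  have "prefix x (w @ d0)" using xy w by (auto intro: prefix_order.trans)
  then have "x = w @ d0" using X_common_prefix[OF x, of "w @ d0"] d0 mem_D by blast
  with xy w D_nonempty_words[OF d0] show ?thesis by (auto dest: prefix_length_le)
next
  case (new g d)
  then have "x = g @ w" using X_common_prefix[OF x, of "g @ w" y] mem_G xy by auto
  with new show ?thesis by blast
qed

lemma X_suffix_of_Y:
  assumes y: "y \<in> Y" and x: "x \<in> X" and xy: "suffix x y"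
  shows "x = y \<or> (\<exists>g\<in>G. \<exists>d\<in>D. x = w @ d \<and> y = g @ w @ d)"
  using y
proof (cases rule: Y_cases)
  case old
  then show ?thesis using X_common_suffix[OF x old(1) xy suffix_order.refl] by blast
next
  case w
  obtain g0 where g0: "g0 \<in> G" using G_nonempty by blast
  have "suffix x (g0 @ w)" using xy w by (auto intro: suffix_order.trans simp: suffix_def)
  then have "x = g0 @ w" using X_common_suffix[OF x, of "g0 @ w"] g0 mem_G by blast
  with xy w G_nonempty_words[OF g0] show ?thesis by (auto dest: suffix_length_le)
next
  case (new g d)
  then have "x = w @ d" using X_common_suffix[OF x, of "w @ d" y] mem_D xy by (auto simp: suffix_def)
  with new show ?thesis by blast
qed

lemma prefix_w_in_Y:
  assumes y: "y \<in> Y" and wy: "prefix w y"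
  shows "y = w"
  using y
proof (cases rule: Y_cases)
  case old
  with wy mem_D show ?thesis by (auto simp: prefix_def)
next
  case (new g d)
  then have "prefix w (g @ w)" using prefix_length_prefix[of w y "g @ w"] wy by simp
  then obtain d' where "g @ w = w @ d'" by (auto simp: prefix_def)
  with new mem_G mem_D Gw_neq_wD show ?thesis by metis
qed

lemma suffix_w_in_Y:
  assumes y: "y \<in> Y" and wy: "suffix w y"
  shows "y = w"
  using y
proof (cases rule: Y_cases)
  case old
  with wy mem_G show ?thesis by (auto simp: suffix_def)
next
  case (new g d)
  then have "suffix w (w @ d)" using suffix_length_suffix[of w y "w @ d"] wy by (simp add: suffix_def)
  then obtain g' where "w @ d = g' @ w" by (auto simp: suffix_def)
  with new mem_G mem_D Gw_neq_wD show ?thesis by metis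
qed

text \<open>Y is a prefix code: the only delicate case is gwd \<le> y, where y = g'wd' by the
  above, so g = g' and wd \<le> wd' forces d = d'.\<close>

lemma Y_prefix_eq:
  assumes x: "x \<in> Y" and y: "y \<in> Y" and xy: "prefix x y"
  shows "x = y"
  using x
proof (cases rule: Y_cases)
  case old
  with X_prefix_of_Y[OF y old(1) xy] show ?thesis by blast
next
  case w
  with prefix_w_in_Y[OF y] xy show ?thesis by simp
next
  case (new g d)
  have "prefix (g @ w) x" using new by simp
  then have gw: "g @ w \<in> X" "prefix (g @ w) y"
    using prefix_order.trans[OF _ xy] new mem_G by auto
  from X_prefix_of_Y[OF y gw] Gw_notin_Y[OF new(1)] y
  obtain d' where d': "d' \<in> D" "y = g @ w @ d'" by auto
  then have "prefix (w @ d) (w @ d')" using xy new by simp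
  then have "w @ d = w @ d'" using X_common_prefix[of "w @ d" "w @ d'"] new d' mem_D by blast
  with new d' show ?thesis by simp
qed

lemma Y_suffix_eq:
  assumes x: "x \<in> Y" and y: "y \<in> Y" and xy: "suffix x y"
  shows "x = y"
  using x
proof (cases rule: Y_cases)
  case old
  with X_suffix_of_Y[OF y old(1) xy] show ?thesis by blast
next
  case w
  with suffix_w_in_Y[OF y] xy show ?thesis by simp
next
  case (new g d)
  have wd: "w @ d \<in> X" "suffix (w @ d) y" using new xy mem_D
    by (auto intro: suffix_order.trans simp: suffix_def)
  from X_suffix_of_Y[OF y wd] wD_notin_Y[OF new(2)] y
  obtain g' where g': "g' \<in> G" "y = g' @ w @ d" by auto
  then have "suffix (g @ w) (g' @ w)" using xy new by (simp add: suffix_def)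
  then have "g @ w = g' @ w" using X_common_suffix[of "g @ w" "g' @ w"] new g' mem_G by blast
  with new g' show ?thesis by simp
qed

theorem bifix_Y: "bifix_code Y"
proof -
  have "[] \<notin> Y" using bifix_code_Nil[OF bifix_X] w_nonempty by (auto elim: Y_cases)
  then show ?thesis
    unfolding bifix_code_def strict_prefix_def strict_suffix_def
    using Y_prefix_eq Y_suffix_eq by blast
qed

text \<open>A prefix p of z that is free for Y but not for X ends with a word of X removed
  from Y.  It cannot end with gw (then w \<in> Y would be a suffix), so p = q d with d \<in> D
  and q ending with w.\<close>

lemma freeP_Y_minus_X:
  assumes "p \<in> freeP Y z - freeP X z"
  obtains q d where "d \<in> D" "p = q @ d" "suffix w q"
proof -
  from assms obtain x where x: "x \<in> X" "suffix x p" and pY: "\<forall>s. suffix s p \<longrightarrow> s \<notin> Y"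
    by (auto simp: freeP_def)
  with X_removed consider (g) g where "g \<in> G" "x = g @ w" | (d) d where "d \<in> D" "x = w @ d"
    by blast
  then show thesis
  proof cases
    case g
    then have "suffix w p" using x(2) suffix_order.trans[of w x p] by (simp add: suffix_def)
    with pY w_in_Y show ?thesis by blast
  next
    case d
    then obtain p0 where "p = (p0 @ w) @ d" using x(2) by (auto simp: suffix_def)
    with d show ?thesis by (intro that[of d "p0 @ w"]) (auto simp: suffix_def)
  qed
qed

text \<open>Removing that d yields a prefix free for X but not for Y: a suffix of q in X
  would be of the form gw, and then the factor gwd of z would be a suffix of p in Y.\<close>

lemma strip_D_freeP:
  assumes z: "z \<in> F" and p: "p \<in> freeP Y z" and d: "d \<in> D" and pq: "p = q @ d"
    and wq: "suffix w q"
  shows "q \<in> freeP X z - freeP Y z"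
proof -
  have pz: "prefix p z" and pY: "\<forall>s. suffix s p \<longrightarrow> s \<notin> Y" using p by (auto simp: freeP_def)
  have "\<forall>s. suffix s q \<longrightarrow> s \<notin> X"
  proof (intro allI impI notI)
    fix s assume sq: "suffix s q" and sX: "s \<in> X"
    from suffix_same_cases[OF sq wq] show False
    proof
      assume "suffix s w"
      from X_suffix_of_Y[OF w_in_Y sX this] w_notin_X sX
      obtain g d' where d': "d' \<in> D" and eq: "w = g @ w @ d'" by blast
      have "length w = length (g @ w @ d')" using arg_cong[where f = length, OF eq] .
      with D_nonempty_words[OF d'] show False by simp
    next
      assume "suffix w s"
      then obtain g where s: "s = g @ w" by (auto simp: suffix_def)
      with sX have g: "g \<in> G" by (simp add: mem_G)
      obtain q0 r where "q = q0 @ s" "z = p @ r" using sq pz by (auto simp: suffix_def prefix_def)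
      with s pq have "q0 @ (g @ w @ d) @ r \<in> F" and gwd: "suffix (g @ w @ d) p"
        using z by (auto simp: suffix_def)
      then have "g @ w @ d \<in> Y" using GwD_in_Y[OF g d] recurrent_factor[OF recurrent_F] by blast
      with gwd pY show False by blast
    qed
  qed
  moreover have "prefix q z" using pz pq by (metis prefix_order.trans prefixI)
  ultimately show ?thesis using wq w_in_Y by (auto simp: freeP_def)
qed

lemma D_after_common_prefix:
  assumes "prefix (q @ d1) z" "prefix (q @ d2) z" "d1 \<in> D" "d2 \<in> D"
  shows "d1 = d2"
proof -
  have "prefix d1 d2 \<or> prefix d2 d1" using prefix_same_cases[OF assms(1,2)] by simp
  then have "prefix (w @ d1) (w @ d2) \<or> prefix (w @ d2) (w @ d1)" by simp
  then have "w @ d1 = w @ d2"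
    using X_common_prefix[of "w @ d1" "w @ d2"] assms(3,4) mem_D by (metis prefix_order.refl)
  then show ?thesis by simp
qed

text \<open>Deleting the trailing d injects the prefixes free for Y only into those free for
  X only; hence delta Y \<le> delta X on F.\<close>

theorem delta_Y_le_X:
  assumes z: "z \<in> F"
  shows "delta Y z \<le> delta X z"
proof -
  let ?A = "freeP Y z - freeP X z"
  have "\<forall>p\<in>?A. \<exists>q. \<exists>d\<in>D. p = q @ d \<and> suffix w q"
  proof
    fix p assume "p \<in> ?A"
    then show "\<exists>q. \<exists>d\<in>D. p = q @ d \<and> suffix w q" by (rule freeP_Y_minus_X) blast
  qed
  from bchoice[OF this]
  obtain f where f: "\<forall>p\<in>?A. \<exists>d\<in>D. p = f p @ d \<and> suffix w (f p)" ..
  have maps: "f ` ?A \<subseteq> freeP X z - freeP Y z"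
  proof
    fix q assume "q \<in> f ` ?A"
    then obtain p where p: "p \<in> ?A" and q: "q = f p" by blast
    with f obtain d where "d \<in> D" "p = q @ d" "suffix w q" by blast
    with p show "q \<in> freeP X z - freeP Y z" using strip_D_freeP[OF z] by blast
  qed
  have "inj_on f ?A"
  proof (rule inj_onI)
    fix p1 p2 assume p1: "p1 \<in> ?A" and p2: "p2 \<in> ?A" and eq: "f p1 = f p2"
    obtain d1 where d1: "d1 \<in> D" "p1 = f p1 @ d1" using f p1 by blast
    obtain d2 where d2: "d2 \<in> D" "p2 = f p1 @ d2" using f p2 eq by auto
    have "prefix (f p1 @ d1) z" "prefix (f p1 @ d2) z"
      using p1 p2 d1 d2 by (auto simp: freeP_def)
    then have "d1 = d2" using D_after_common_prefix d1(1) d2(1) by blast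
    with d1 d2 show "p1 = p2" by simp
  qed
  then have "card (freeP Y z) \<le> card (freeP X z)"
    by (rule card_le_by_injection_on_difference[OF finite_freeP finite_freeP _ maps])
  then show ?thesis by (simp add: delta_bifix_freeP bifix_X bifix_Y)
qed

theorem maximal_Y: "F_maximal_bifix F Y"
proof -
  obtain N where "\<forall>z\<in>F. delta X z \<le> N" using bounded_delta[OF recurrent_F finite_X maximal_X] by blast
  then have "\<forall>z\<in>F. delta Y z \<le> N" using delta_Y_le_X le_trans by blast
  then show ?thesis by (rule bounded_delta_imp_maximal[OF recurrent_F bifix_Y Y_subset_F])
qed

text \<open>Conversely, a prefix free for X but not for Y ends with a word of Y not in X,
  hence with w (a suffix of gwd in Y would give the suffix wd \<in> X).\<close>

lemma freeP_X_minus_Y_suffix_w: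
  assumes "p \<in> freeP X z - freeP Y z"
  shows "suffix w p"
proof -
  from assms obtain y where y: "y \<in> Y" "suffix y p" and pX: "\<forall>s. suffix s p \<longrightarrow> s \<notin> X"
    by (auto simp: freeP_def)
  from y(1) show ?thesis
  proof (cases rule: Y_cases)
    case old
    then show ?thesis using y pX by blast
  next
    case w
    then show ?thesis using y by simp
  next
    case (new g d)
    then have "suffix (w @ d) p" using suffix_order.trans[OF _ y(2), of "w @ d"] by (simp add: suffix_def)
    then show ?thesis using pX new mem_D by blast
  qed
qed

text \<open>On a saturated word W = z0 t z0, such a prefix p = p0 w is short, so the suffix of
  W starting with w is long and begins with a word of X, which must be some wd: thus
  p can be extended by d inside W.\<close>

lemma extend_by_D_in_saturated:
  assumes z0: "\<forall>z\<in>F. delta X z \<le> delta X z0" and W: "z0 @ t @ z0 \<in> F"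
    and p: "p \<in> freeP X (z0 @ t @ z0) - freeP Y (z0 @ t @ z0)"
  obtains d where "d \<in> D" "prefix (p @ d) (z0 @ t @ z0)"
proof -
  have pW: "prefix p (z0 @ t @ z0)" and pX: "\<forall>s. suffix s p \<longrightarrow> s \<notin> X"
    using p by (auto simp: freeP_def)
  have sat: "delta X (z0 @ t @ z0) \<le> delta X z0" using z0 W by blast
  have lp: "length p \<le> length z0"
  proof (rule ccontr)
    assume "\<not> length p \<le> length z0"
    then have "length z0 < length p" by simp
    from saturated_right[OF bifix_X sat pW this] pX show False by blast
  qed
  obtain p0 where p0: "p = p0 @ w" using freeP_X_minus_Y_suffix_w[OF p] by (auto simp: suffix_def)
  obtain r where r: "z0 @ t @ z0 = p @ r" using pW by (auto simp: prefix_def)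
  have "suffix (w @ r) ((z0 @ t) @ z0)" using r p0 by (simp add: suffix_def)
  moreover have "length z0 < length (w @ r)"
  proof -
    have "length (z0 @ t @ z0) = length p0 + length (w @ r)" using r p0 by simp
    moreover have "length p0 < length z0"
      using lp p0 w_nonempty by (cases w) auto
    ultimately show ?thesis by simp
  qed
  moreover have "delta X ((z0 @ t) @ z0) \<le> delta X z0" using sat by simp
  ultimately obtain x where x: "prefix x (w @ r)" "x \<in> X"
    using saturated_left[OF bifix_X] by blast
  obtain d0 where d0: "d0 \<in> D" using D_nonempty by blast
  have "prefix w x"
  proof (cases "prefix x w")
    case True
    then have "prefix x (w @ d0)" by (rule prefix_prefix)
    then have "x = w @ d0" using X_common_prefix[OF x(2), of "w @ d0" "w @ d0"] d0 mem_D by simp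
    then show ?thesis by simp
  next
    case False
    with prefix_same_cases[OF x(1), of w] show ?thesis by simp
  qed
  then obtain d where "x = w @ d" by (auto simp: prefix_def)
  with x have "d \<in> D" "prefix (p @ d) (z0 @ t @ z0)" using r p0 mem_D by auto
  then show ?thesis by (rule that)
qed

lemma append_D_freeP:
  assumes p: "p \<in> freeP X z" and wp: "suffix w p" and d: "d \<in> D" and pdz: "prefix (p @ d) z"
  shows "p @ d \<in> freeP Y z - freeP X z"
proof -
  have pX: "\<forall>s. suffix s p \<longrightarrow> s \<notin> X" using p by (simp add: freeP_def)
  have wdX: "w @ d \<in> X" using d mem_D by simp
  have wd: "suffix (w @ d) (p @ d)" using wp by (auto simp: suffix_def)
  have "y \<notin> Y" if yp: "suffix y (p @ d)" for y
  proof
    assume "y \<in> Y"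
    then show False
    proof (cases rule: Y_cases)
      case old
      then have "y = w @ d" using X_common_suffix[OF _ wdX yp wd] by blast
      with old d show False by blast
    next
      case w
      from suffix_same_cases[OF wd yp[unfolded w]] show False
      proof
        assume "suffix (w @ d) w"
        then show False using D_nonempty_words[OF d] by (auto dest: suffix_length_le)
      next
        assume "suffix w (w @ d)"
        then obtain g where "w @ d = g @ w" by (auto simp: suffix_def)
        with wdX mem_G d Gw_neq_wD show False by metis
      qed
    next
      case (new g d')
      then have "suffix (w @ d') y" by (simp add: suffix_def)
      then have "suffix (w @ d') (p @ d)" using yp by (rule suffix_order.trans)
      then have "d' = d" using X_common_suffix[OF _ wdX _ wd] new mem_D by blast
      then have "suffix ((g @ w) @ d) (p @ d)" using yp new by simp
      then have "suffix (g @ w) p" by (simp only: same_suffix_suffix)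
      with pX new mem_G show False by blast
    qed
  qed
  moreover have "p @ d \<notin> freeP X z" unfolding freeP_def using wd wdX by blast
  ultimately show ?thesis using pdz by (auto simp: freeP_def)
qed

lemma D_after_common_suffix_w:
  assumes "p1 @ d1 = p2 @ d2" "suffix w p1" "suffix w p2" "d1 \<in> D" "d2 \<in> D"
  shows "d1 = d2"
proof -
  have "suffix (w @ d1) (p1 @ d1)" using assms(2) by (auto simp: suffix_def)
  moreover have "suffix (w @ d2) (p1 @ d1)" unfolding assms(1) using assms(3) by (auto simp: suffix_def)
  ultimately have "w @ d1 = w @ d2" using X_common_suffix assms(4,5) mem_D by blast
  then show ?thesis by simp
qed

text \<open>On a saturated word W, appending a suitable d \<in> D injects the prefixes free for
  X only into those free for Y only; hence delta X W \<le> delta Y W.\<close>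

theorem delta_X_le_Y_saturated:
  assumes z0: "\<forall>z\<in>F. delta X z \<le> delta X z0" and W: "z0 @ t @ z0 \<in> F"
  shows "delta X (z0 @ t @ z0) \<le> delta Y (z0 @ t @ z0)"
proof -
  let ?W = "z0 @ t @ z0"
  let ?A = "freeP X ?W - freeP Y ?W"
  have "\<forall>p\<in>?A. \<exists>q. \<exists>d\<in>D. q = p @ d \<and> prefix q ?W"
    using extend_by_D_in_saturated[OF z0 W] by blast
  from bchoice[OF this]
  obtain f where f: "\<forall>p\<in>?A. \<exists>d\<in>D. f p = p @ d \<and> prefix (f p) ?W" ..
  have maps: "f ` ?A \<subseteq> freeP Y ?W - freeP X ?W"
  proof
    fix q assume "q \<in> f ` ?A"
    then obtain p where p: "p \<in> ?A" and q: "q = f p" by blast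
    with f obtain d where "d \<in> D" "q = p @ d" "prefix q ?W" by blast
    with p show "q \<in> freeP Y ?W - freeP X ?W"
      using append_D_freeP freeP_X_minus_Y_suffix_w by blast
  qed
  have "inj_on f ?A"
  proof (rule inj_onI)
    fix p1 p2 assume p1: "p1 \<in> ?A" and p2: "p2 \<in> ?A" and eq: "f p1 = f p2"
    obtain d1 where d1: "d1 \<in> D" "f p1 = p1 @ d1" using f p1 by blast
    obtain d2 where d2: "d2 \<in> D" "f p1 = p2 @ d2" using f p2 eq by auto
    have "p1 @ d1 = p2 @ d2" using d1 d2 by simp
    moreover have "d1 = d2"
      using D_after_common_suffix_w[OF calculation] freeP_X_minus_Y_suffix_w p1 p2 d1 d2 by blast
    ultimately show "p1 = p2" by simp
  qed
  then have "card (freeP X ?W) \<le> card (freeP Y ?W)"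
    by (rule card_le_by_injection_on_difference[OF finite_freeP finite_freeP _ maps])
  then show ?thesis by (simp add: delta_bifix_freeP bifix_X bifix_Y)
qed

text \<open>Both degrees equal the maximum of delta X: take z0 maximising delta X and
  W = z0 t z0 in F; then delta Y \<le> delta X \<le> delta X z0 \<le> delta X W \<le> delta Y W on F.\<close>

theorem degree_Y: "F_degree F Y = F_degree F X"
proof -
  have F_nonempty: "F \<noteq> {}" using recurrent_F by (simp add: recurrent_def)
  obtain N where "\<forall>z\<in>F. delta X z \<le> N" using bounded_delta[OF recurrent_F finite_X maximal_X] by blast
  with F_nonempty obtain z0 where z0F: "z0 \<in> F" and z0: "\<forall>z\<in>F. delta X z \<le> delta X z0"
    by (rule delta_attains_max)
  from recurrent_F z0F obtain t where W: "z0 @ t @ z0 \<in> F" unfolding recurrent_def by blast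
  have "delta X z0 \<le> delta X (z0 @ t @ z0)"
    using card_mono[OF finite_freeP freeP_mono_append] by (simp add: delta_bifix_freeP[OF bifix_X])
  then have max_W: "delta X z0 \<le> delta Y (z0 @ t @ z0)"
    using delta_X_le_Y_saturated[OF z0 W] by linarith
  have "\<forall>z\<in>F. delta Y z \<le> delta Y (z0 @ t @ z0)"
  proof
    fix z assume "z \<in> F"
    with delta_Y_le_X z0 have "delta Y z \<le> delta X z0" using le_trans by blast
    with max_W show "delta Y z \<le> delta Y (z0 @ t @ z0)" by linarith
  qed
  then have "F_degree F Y = enat (delta Y (z0 @ t @ z0))" by (rule F_degree_eq_max[OF W])
  moreover have "delta Y (z0 @ t @ z0) = delta X z0"
    using delta_Y_le_X[OF W] z0 W max_W by (metis le_antisym le_trans)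
  ultimately show ?thesis using F_degree_eq_max[OF z0F z0] by simp
qed

end

theorem mainTheorem11:
  fixes A :: "'a set" and F X :: "'a list set" and w :: "'a list"
  assumes "finite A"
    and "recurrent A F"
    and "finite X" and "F_maximal_bifix F X"
    and "w \<in> F" and "w \<noteq> []"
  defines "G \<equiv> {u \<in> lists A. u @ w \<in> X}"
    and "D \<equiv> {u \<in> lists A. w @ u \<in> X}"
  assumes "G \<noteq> {}" and "D \<noteq> {}"
    and "(\<lambda>g. g @ w) ` G \<inter> (\<lambda>d. w @ d) ` D = {}"
  shows "finite ((X \<union> {w} \<union> ({g @ w @ d | g d. g \<in> G \<and> d \<in> D} \<inter> F))
                   - ((\<lambda>g. g @ w) ` G \<union> (\<lambda>d. w @ d) ` D))
       \<and> F_maximal_bifix F ((X \<union> {w} \<union> ({g @ w @ d | g d. g \<in> G \<and> d \<in> D} \<inter> F))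
                   - ((\<lambda>g. g @ w) ` G \<union> (\<lambda>d. w @ d) ` D))
       \<and> F_degree F ((X \<union> {w} \<union> ({g @ w @ d | g d. g \<in> G \<and> d \<in> D} \<inter> F))
                   - ((\<lambda>g. g @ w) ` G \<union> (\<lambda>d. w @ d) ` D)) = F_degree F X"
proof -
  interpret internal_transformation A F X w G D
    by unfold_locales (use assms in \<open>simp_all add: G_def D_def\<close>)
  show ?thesis using finite_Y maximal_Y degree_Y unfolding Y_def by blast
qed

end
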